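(* Let $r,s\ge2$ be fixed integers such that either $s\ge5$ and $r>\rho(s)$, or $s\in\{2,3,4\}$ and $(r,s)\ne(2,2)$. Then: (a) Every local maximum of $\varphi$ on $K$ either equals $(0,0)$ or lies in the interior of $K$. (b) For every stationary point $(\alpha,\beta)$ of $\varphi$ in the interior of $K$, there exists $x\in(-1,\infty)$ such that $\alpha=\alpha(x)$, $\beta=\beta(x)$, and \[ (rs-r-s)\Big(1+\frac{x}{r-1}\Big)^{s-2}=(1+x)\Big(rs-r-s+sx+\frac{x(x+1)}{r-1}\Big).\tag{$\ast$} \] (c) Let $f:(-1,\infty)\to\mathbb R$ be defined by $f(x)=\varphi(\alpha(x),\beta(x))$. If $x\in(-1,\infty)$ is a stationary point of $f$, then $x$ satisfies $(\ast)$.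
   Context: Let $g(x)=x\log x$ for $x>0$, with $g(0)=0$. Let \[ K=\{(\alpha,\beta)\in\mathbb R^2:\alpha,\beta\ge0,\ (s-1)\alpha+\beta\le1\}. \] Define $\varphi:K\to\mathbb R$ by \begin{align*} \varphi(\alpha,\beta)&=(\alpha+\beta)\log(r-1)+g(\alpha+\beta)+g(r-1-\alpha-\beta)-\tfrac{2}{s-1}g(\beta)-g(\alpha)\\ &\quad-\tfrac{1}{s(s-1)}g(rs-r-s-s\beta)-\tfrac{1}{s-1}g(1-(s-1)\alpha-\beta). \end{align*} For $x\ge-1$, let \[ \alpha(x)=\frac{1+x}{rs-r+sx+\frac{x(x+1)}{r-1}},\qquad \beta(x)=\frac{rs-r-s}{rs-r+sx+\frac{x(x+1)}{r-1}}. \] For $s\ge5$, $\rho(s)$ is the unique real number in $(2,\infty)$ satisfying \[ (s-1)^{\rho}(\rho-1)^{s(\rho-1)}=\rho^{\rho s-\rho-s}(\rho s-\rho-s)^{(\rho s-\rho-s)/(s-1)}. \] *)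

theory Defs
  imports "HOL-Analysis.Analysis"
begin

text \<open>g(x) = x log x for x > 0, g(0) = 0. The paper only uses g on [0,oo);
  the value 0 for negative arguments is an irrelevant convention, since phi is only
  considered on its natural domain phi_dom below (where all arguments of g are >= 0).\<close>
definition gfun :: "real \<Rightarrow> real" where
  "gfun x = (if x > 0 then x * ln x else 0)"

definition Kset :: "nat \<Rightarrow> (real \<times> real) set" where
  "Kset s = {(a, b). a \<ge> 0 \<and> b \<ge> 0 \<and> (real s - 1) * a + b \<le> 1}"

definition phi :: "nat \<Rightarrow> nat \<Rightarrow> real \<times> real \<Rightarrow> real" where
  "phi r s p = (case p of (a, b) \<Rightarrow>
      (a + b) * ln (real r - 1) + gfun (a + b) + gfun (real r - 1 - a - b)
      - 2 / (real s - 1) * gfun b - gfun a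
      - 1 / (real s * (real s - 1)) * gfun (real r * real s - real r - real s - real s * b)
      - 1 / (real s - 1) * gfun (1 - (real s - 1) * a - b))"

text \<open>Natural domain of phi: the points of K where every argument of g is nonnegative.
  (On K all arguments except rs-r-s-s*beta are automatically nonnegative.)\<close>
definition phi_dom :: "nat \<Rightarrow> nat \<Rightarrow> (real \<times> real) set" where
  "phi_dom r s = {p \<in> Kset s. 0 \<le> real r * real s - real r - real s - real s * snd p}"

definition den_x :: "nat \<Rightarrow> nat \<Rightarrow> real \<Rightarrow> real" where
  "den_x r s x = real r * real s - real r + real s * x + x * (x + 1) / (real r - 1)"

definition alpha_x :: "nat \<Rightarrow> nat \<Rightarrow> real \<Rightarrow> real" where
  "alpha_x r s x = (1 + x) / den_x r s x"

definition beta_x :: "nat \<Rightarrow> nat \<Rightarrow> real \<Rightarrow> real" where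
  "beta_x r s x = (real r * real s - real r - real s) / den_x r s x"

definition star_eq :: "nat \<Rightarrow> nat \<Rightarrow> real \<Rightarrow> bool" where
  "star_eq r s x \<longleftrightarrow>
     (real r * real s - real r - real s) * (1 + x / (real r - 1)) ^ (s - 2)
     = (1 + x) * (real r * real s - real r - real s + real s * x + x * (x + 1) / (real r - 1))"

definition f_dom :: "nat \<Rightarrow> nat \<Rightarrow> real set" where
  "f_dom r s = {x. x > -1 \<and> (alpha_x r s x, beta_x r s x) \<in> phi_dom r s}"

definition rho :: "nat \<Rightarrow> real" where
  "rho s = (THE p. p > 2 \<and>
     (real s - 1) powr p * (p - 1) powr (real s * (p - 1))
     = p powr (p * real s - p - real s) * (p * real s - p - real s) powr ((p * real s - p - real s) / (real s - 1)))"

end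

theory Submission
  imports Defs "HOL-Real_Asymp.Real_Asymp"
begin

text \<open>
  Since \<open>g'(x) = log x + 1\<close> tends to \<open>-\<infinity>\<close> as \<open>x \<rightarrow> 0+\<close>, the derivative of \<open>\<phi>\<close> along a
  suitable segment entering \<open>K\<close> from a boundary point other than the origin tends to \<open>+\<infinity>\<close>:
  on the edges \<open>\<alpha> = 0\<close> and \<open>\<beta> = 0\<close> one moves in the direction \<open>\<plusminus>(1, 1 - s)\<close>, which keeps
  \<open>1 - (s-1)\<alpha> - \<beta>\<close> constant (this argument of \<open>g\<close> vanishes at the corners), and on the edge
  \<open>(s-1)\<alpha> + \<beta> = 1\<close> one decreases \<open>\<alpha>\<close>. So \<open>\<phi>\<close> increases strictly into \<open>K\<close> and no such
  point is a local maximum.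

  At an interior point the equations \<open>\<partial>\<phi>/\<partial>\<alpha> = 0\<close> and \<open>\<partial>\<phi>/\<partial>\<beta> = 0\<close> exponentiate to
  \<open>(r-1)(\<alpha>+\<beta>)(1-(s-1)\<alpha>-\<beta>) = \<alpha>(r-1-\<alpha>-\<beta>)\<close> and
  \<open>\<alpha>^(s-1) (rs-r-s-s\<beta>) = \<beta>^2 (1-(s-1)\<alpha>-\<beta>)^(s-2)\<close>. The positive solutions of the first
  are exactly the points \<open>(\<alpha>(x), \<beta>(x))\<close>, with \<open>x = (rs-r-s)\<alpha>/\<beta> - 1\<close>, and on this curve
  the second becomes \<open>(*)\<close>. Along the curve \<open>\<partial>\<phi>/\<partial>\<alpha>\<close> vanishes identically and
  \<open>\<beta>'(x) \<noteq> 0\<close>, so a stationary point of \<open>f\<close> is again a zero of \<open>\<partial>\<phi>/\<partial>\<beta>\<close>.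
\<close>

lemma gfun_has_real_derivative:
  assumes "0 < x"
  shows "(gfun has_real_derivative ln x + 1) (at x)"
proof -
  have "((\<lambda>x. x * ln x) has_real_derivative ln x + 1) (at x)"
    using assms by (auto intro!: derivative_eq_intros)
  then show ?thesis
    by (rule has_field_derivative_transform_within_open[of _ _ _ "{0<..}"])
      (use assms in \<open>auto simp: gfun_def\<close>)
qed

lemma isCont_gfun: "isCont gfun x"
proof -
  consider "0 < x" | "x < 0" | "x = 0" by linarith
  then show ?thesis
  proof cases
    case 1
    then show ?thesis using gfun_has_real_derivative DERIV_isCont by blast
  next
    case 2
    have "\<forall>\<^sub>F y in nhds x. gfun y = 0"
      using eventually_nhds_in_open[of "{..<0}" x] 2 by (auto simp: gfun_def elim!: eventually_mono)
    then show ?thesis using isCont_cong by force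
  next
    case 3
    have "((\<lambda>x::real. x * ln x) \<longlongrightarrow> 0) (at_right 0)" by real_asymp
    then have "(gfun \<longlongrightarrow> 0) (at_right 0)"
      by (rule filterlim_cong[THEN iffD1, rotated 3])
        (auto simp: gfun_def eventually_at_right_field intro: exI[of _ 1])
    moreover have "(gfun \<longlongrightarrow> 0) (at_left 0)"
      by (rule tendsto_eventually) (auto simp: gfun_def eventually_at_left_field intro: exI[of _ "-1"])
    ultimately show ?thesis
      using 3 by (simp add: isCont_def filterlim_split_at gfun_def)
  qed
qed

lemma continuous_on_gfun [continuous_intros]:
  "continuous_on A f \<Longrightarrow> continuous_on A (\<lambda>x. gfun (f x))"
  using continuous_on_compose2[of UNIV gfun A f] isCont_gfun
  by (auto intro: continuous_at_imp_continuous_on)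

lemma gfun_comp_has_real_derivative:
  assumes f: "(f has_real_derivative f') (at x)"
    and pos_or_const: "0 < f x \<or> (\<forall>\<^sub>F y in nhds x. f y = f x)"
  shows "((\<lambda>y. gfun (f y)) has_real_derivative (ln (f x) + 1) * f') (at x)"
proof (cases "0 < f x")
  case True
  then show ?thesis using DERIV_chain2[OF gfun_has_real_derivative f] by simp
next
  case False
  then have const: "\<forall>\<^sub>F y in nhds x. f y = f x" using pos_or_const by blast
  have "(f has_real_derivative 0) (at x) \<longleftrightarrow> ((\<lambda>_. f x) has_real_derivative 0) (at x)"
    by (rule DERIV_cong_ev[OF refl const refl])
  then have "f' = 0" using DERIV_unique f by auto
  moreover have "\<forall>\<^sub>F y in nhds x. gfun (f y) = gfun (f x)"
    using const by (auto elim: eventually_mono)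
  then have "((\<lambda>y. gfun (f y)) has_real_derivative 0) (at x)
      \<longleftrightarrow> ((\<lambda>_. gfun (f x)) has_real_derivative 0) (at x)"
    by (rule DERIV_cong_ev[OF refl _ refl])
  ultimately show ?thesis by simp
qed

definition dphi_da :: "nat \<Rightarrow> nat \<Rightarrow> real \<Rightarrow> real \<Rightarrow> real" where
  "dphi_da r s a b = ln (real r - 1) + ln (a + b) - ln (real r - 1 - a - b) - ln a
     + ln (1 - (real s - 1) * a - b)"

definition dphi_db :: "nat \<Rightarrow> nat \<Rightarrow> real \<Rightarrow> real \<Rightarrow> real" where
  "dphi_db r s a b = ln (real r - 1) + ln (a + b) - ln (real r - 1 - a - b)
     + (ln (real r * real s - real r - real s - real s * b) + ln (1 - (real s - 1) * a - b)
        - 2 * ln b) / (real s - 1)"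

lemma phi_has_derivative_along:
  fixes A B :: "real \<Rightarrow> real"
  assumes "s \<ge> 2"
    and "(A has_real_derivative A') (at x)" and "(B has_real_derivative B') (at x)"
    and "\<forall>f \<in> {\<lambda>y. A y + B y, \<lambda>y. real r - 1 - A y - B y, B, A,
               \<lambda>y. real r * real s - real r - real s - real s * B y,
               \<lambda>y. 1 - (real s - 1) * A y - B y}.
           0 < f x \<or> (\<forall>\<^sub>F y in nhds x. f y = f x)"
  shows "((\<lambda>y. phi r s (A y, B y)) has_real_derivative
           dphi_da r s (A x) (B x) * A' + dphi_db r s (A x) (B x) * B') (at x)"
proof -
  define R S where "R = real r" and "S = real s"
  have gfun_arg: "((\<lambda>y. gfun (f y)) has_real_derivative (ln (f x) + 1) * f') (at x)"
    if "f \<in> {\<lambda>y. A y + B y, \<lambda>y. R - 1 - A y - B y, B, A, \<lambda>y. R * S - R - S - S * B y,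
               \<lambda>y. 1 - (S - 1) * A y - B y}" and "(f has_real_derivative f') (at x)" for f f'
    using that(1) unfolding R_def S_def
    by (intro gfun_comp_has_real_derivative that(2) bspec[OF assms(4)])
  define D where "D = (A' + B') * ln (R - 1) + (ln (A x + B x) + 1) * (A' + B')
      + (ln (R - 1 - A x - B x) + 1) * (- A' - B')
      - 2 / (S - 1) * ((ln (B x) + 1) * B') - (ln (A x) + 1) * A'
      - 1 / (S * (S - 1)) * ((ln (R * S - R - S - S * B x) + 1) * (- S * B'))
      - 1 / (S - 1) * ((ln (1 - (S - 1) * A x - B x) + 1) * (- (S - 1) * A' - B'))"
  have "((\<lambda>y. phi r s (A y, B y)) has_real_derivative D) (at x)"
    unfolding phi_def prod.case R_def[symmetric] S_def[symmetric] D_def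
    by (intro DERIV_diff DERIV_add DERIV_cmult DERIV_cmult_right gfun_arg[simplified]
          derivative_intros assms(2,3))
      (auto intro!: derivative_eq_intros assms(2,3) simp: algebra_simps)
  moreover have "D = dphi_da r s (A x) (B x) * A' + dphi_db r s (A x) (B x) * B'"
  proof -
    define c where "c = 1 / (S - 1)"
    have "S - 1 \<noteq> 0" "S \<noteq> 0" using assms(1) by (auto simp: S_def)
    then have eqs: "\<And>X. 1 / (S * (S - 1)) * (X * (- S * B')) = - (c * (X * B'))"
      "\<And>X. 1 / (S - 1) * (X * (- (S - 1) * A' - B')) = - (X * A') - c * (X * B')"
      "\<And>X. 2 / (S - 1) * X = 2 * c * X" "\<And>X. X / (S - 1) = c * X"
      by (auto simp: c_def field_simps)
    show ?thesis
      unfolding D_def dphi_da_def dphi_db_def R_def[symmetric] S_def[symmetric] eqs(1-3)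
      unfolding eqs(4) by (simp add: algebra_simps)
  qed
  ultimately show ?thesis by simp
qed

lemma continuous_on_phi: "continuous_on UNIV (phi r s)"
  unfolding phi_def case_prod_unfold by (intro continuous_intros)

lemma rs_sub_r_sub_s_pos:
  assumes "r \<ge> 2" and "s \<ge> 2" and "(r, s) \<noteq> (2, 2)"
  shows "0 < real r * real s - real r - real s"
proof -
  have "2 \<le> (real r - 1) * (real s - 1)"
  proof (cases "r \<ge> 3")
    case True
    then show ?thesis using mult_mono[of 2 "real r - 1" 1 "real s - 1"] assms(2) by simp
  next
    case False
    then have "s \<ge> 3" using assms by fastforce
    then show ?thesis using mult_mono[of 1 "real r - 1" 2 "real s - 1"] assms(1) by simp
  qed
  then show ?thesis by (simp add: algebra_simps)
qed

lemma phi_dom_args_nonneg: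
  assumes "(a, b) \<in> phi_dom r s" and "r \<ge> 2" and "s \<ge> 2"
  shows "0 \<le> a" "0 \<le> b" "0 \<le> a + b" "0 \<le> real r - 1 - a - b"
    "0 \<le> real r * real s - real r - real s - real s * b" "0 \<le> 1 - (real s - 1) * a - b"
proof -
  have "0 \<le> a" "0 \<le> b" "(real s - 1) * a + b \<le> 1"
    "0 \<le> real r * real s - real r - real s - real s * b"
    using assms(1) by (auto simp: phi_dom_def Kset_def)
  moreover have "0 \<le> (real s - 2) * a" using \<open>0 \<le> a\<close> assms(3) by simp
  ultimately show "0 \<le> a" "0 \<le> b" "0 \<le> a + b" "0 \<le> real r - 1 - a - b"
    "0 \<le> real r * real s - real r - real s - real s * b" "0 \<le> 1 - (real s - 1) * a - b"
    using assms(2) by (auto simp: algebra_simps)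
qed

lemma phi_dom_r_sub_one_sub_pos:
  assumes "(a, b) \<in> phi_dom r s" and "r \<ge> 2" and "s \<ge> 2" and "(r, s) \<noteq> (2, 2)"
  shows "0 < real r - 1 - a - b"
proof -
  note nonneg = phi_dom_args_nonneg[OF assms(1-3)]
  have "0 \<le> (real s - 2) * a" using nonneg(1) assms(3) by simp
  consider "r \<ge> 3" | "r = 2" "s \<ge> 3" using assms(2-4) by fastforce
  then show ?thesis
  proof cases
    case 1
    then show ?thesis using nonneg(6) \<open>0 \<le> (real s - 2) * a\<close> by (auto simp: algebra_simps)
  next
    case 2
    show ?thesis
    proof (cases "a = 0")
      case True
      then have "real s * b \<le> real s - 2" using nonneg(5) 2 by simp
      then have "real s * b < real s * 1" by linarith
      then have "b < 1" using 2 by (simp only: mult_less_cancel_left_pos)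
      then show ?thesis using True 2 by simp
    next
      case False
      then have "0 < (real s - 2) * a" using nonneg(1) 2 by simp
      then show ?thesis using nonneg(6) 2 by (auto simp: algebra_simps)
    qed
  qed
qed

lemma affine_nonneg_on_interval_pos_or_const:
  fixes c d T t :: real
  assumes nonneg: "\<forall>\<tau>\<in>{0<..<T}. 0 \<le> c + \<tau> * d" and t: "t \<in> {0<..<T}"
  shows "0 < c + t * d \<or> d = 0"
proof (rule ccontr)
  assume "\<not> (0 < c + t * d \<or> d = 0)"
  then have zero: "c + t * d = 0" and "d \<noteq> 0" using nonneg t by fastforce+
  then consider "0 < d" | "d < 0" by linarith
  then show False
  proof cases
    case 1
    have "c + (t / 2) * d < 0" using zero mult_pos_pos[OF 1, of t] t by (simp add: field_simps)
    then show False using bspec[OF nonneg, of "t / 2"] t by simp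
  next
    case 2
    have "c + ((t + T) / 2) * d < 0" using zero mult_neg_pos[OF 2, of "T - t"] t
      by (simp add: field_simps)
    then show False using bspec[OF nonneg, of "(t + T) / 2"] t by simp
  qed
qed

text \<open>An argument of \<open>g\<close> that vanishes somewhere inside a segment in the domain of \<open>\<phi>\<close> is
  constant along the segment, so \<open>\<phi>\<close> is differentiable there.\<close>

lemma phi_has_derivative_on_segment:
  assumes "r \<ge> 2" and "s \<ge> 2"
    and seg: "\<forall>\<tau>\<in>{0<..<T}. (a + \<tau> * da, b + \<tau> * db) \<in> phi_dom r s" and t: "t \<in> {0<..<T}"
  shows "((\<lambda>\<tau>. phi r s (a + \<tau> * da, b + \<tau> * db)) has_real_derivative
           dphi_da r s (a + t * da) (b + t * db) * da + dphi_db r s (a + t * da) (b + t * db) * db) (at t)"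
proof (rule phi_has_derivative_along)
  have pos_or_const: "0 < c + t * d \<or> (\<forall>\<^sub>F \<tau> in nhds t. c + \<tau> * d = c + t * d)"
    if "\<forall>\<tau>\<in>{0<..<T}. 0 \<le> c + \<tau> * d" for c d
    using affine_nonneg_on_interval_pos_or_const[OF that t] by auto
  note nonneg = phi_dom_args_nonneg[OF bspec[OF seg] assms(1,2)]
  show "\<forall>f\<in>{\<lambda>\<tau>. a + \<tau> * da + (b + \<tau> * db), \<lambda>\<tau>. real r - 1 - (a + \<tau> * da) - (b + \<tau> * db),
      \<lambda>\<tau>. b + \<tau> * db, \<lambda>\<tau>. a + \<tau> * da,
      \<lambda>\<tau>. real r * real s - real r - real s - real s * (b + \<tau> * db),
      \<lambda>\<tau>. 1 - (real s - 1) * (a + \<tau> * da) - (b + \<tau> * db)}.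
      0 < f t \<or> (\<forall>\<^sub>F y in nhds t. f y = f t)"
    using pos_or_const[of "a + b" "da + db"] pos_or_const[of "real r - 1 - a - b" "- da - db"]
      pos_or_const[of b db] pos_or_const[of a da]
      pos_or_const[of "real r * real s - real r - real s - real s * b" "- real s * db"]
      pos_or_const[of "1 - (real s - 1) * a - b" "- (real s - 1) * da - db"]
      nonneg
    by (simp add: algebra_simps)
qed (use assms in \<open>auto intro!: derivative_eq_intros\<close>)

lemma not_local_max_if_ray_derivative_tendsto_at_top:
  fixes f :: "'a::real_normed_vector \<Rightarrow> real"
  assumes cont: "continuous_on UNIV f" and "0 < T"
    and ray: "\<forall>t\<in>{0<..<T}. p + t *\<^sub>R v \<in> S \<and> ((\<lambda>\<tau>. f (p + \<tau> *\<^sub>R v)) has_real_derivative D t) (at t)"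
    and lim: "filterlim D at_top (at_right 0)"
  shows "\<not> (\<exists>e>0. \<forall>q\<in>S. dist q p < e \<longrightarrow> f q \<le> f p)"
proof
  assume "\<exists>e>0. \<forall>q\<in>S. dist q p < e \<longrightarrow> f q \<le> f p"
  then obtain e where "0 < e" and max: "\<forall>q\<in>S. dist q p < e \<longrightarrow> f q \<le> f p" by blast
  have "\<forall>\<^sub>F t in at_right 0. 0 < D t" using lim by (simp add: filterlim_at_top_dense)
  then obtain T' where "0 < T'" and pos: "\<forall>t. 0 < t \<longrightarrow> t < T' \<longrightarrow> 0 < D t"
    by (auto simp: eventually_at_right_field)
  define t where "t = min (min T T') (e / (norm v + 1)) / 2"
  have "0 < norm v + 1" by (simp add: add_nonneg_pos)
  then have "0 < t" "t < T" "t \<le> T'" using \<open>0 < T\<close> \<open>0 < T'\<close> \<open>0 < e\<close> by (auto simp: t_def)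
  have "f (p + 0 *\<^sub>R v) < f (p + t *\<^sub>R v)"
  proof (rule DERIV_pos_imp_increasing_open[OF \<open>0 < t\<close>])
    show "\<exists>y. ((\<lambda>\<tau>. f (p + \<tau> *\<^sub>R v)) has_real_derivative y) (at \<tau>) \<and> 0 < y"
      if "0 < \<tau>" "\<tau> < t" for \<tau>
      using ray pos that \<open>t < T\<close> \<open>t \<le> T'\<close> by force
    show "continuous_on {0..t} (\<lambda>\<tau>. f (p + \<tau> *\<^sub>R v))"
      by (intro continuous_on_compose2[OF cont] continuous_intros) auto
  qed
  moreover have "dist (p + t *\<^sub>R v) p < e"
  proof -
    have "t \<le> e / (norm v + 1) / 2"
      unfolding t_def by (intro divide_right_mono min.cobounded2) simp
    then have "t * (norm v + 1) \<le> e / 2"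
      using \<open>0 < norm v + 1\<close> by (simp add: field_simps)
    then show ?thesis using \<open>0 < t\<close> \<open>0 < e\<close> by (simp add: dist_norm algebra_simps)
  qed
  ultimately show False using max ray \<open>0 < t\<close> \<open>t < T\<close> by fastforce
qed

lemma filterlim_at_top_if_ge_minus_ln:
  fixes c D :: "real \<Rightarrow> real"
  assumes "(c \<longlongrightarrow> L) (at_right 0)" and "0 < k"
    and "\<forall>\<^sub>F t in at_right 0. c t - k * ln t \<le> D t"
  shows "filterlim D at_top (at_right 0)"
proof (rule filterlim_at_top_mono[OF _ assms(3)])
  have "filterlim (\<lambda>t::real. - ln t) at_top (at_right 0)"
    using ln_at_0 by (simp add: filterlim_uminus_at_bot)
  then have "filterlim (\<lambda>t. k * - ln t) at_top (at_right 0)"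
    by (rule filterlim_tendsto_pos_mult_at_top[OF tendsto_const \<open>0 < k\<close>])
  then show "filterlim (\<lambda>t. c t - k * ln t) at_top (at_right 0)"
    using filterlim_tendsto_add_at_top[OF assms(1), of "\<lambda>t. k * - ln t"] by simp
qed

lemma phi_not_local_max_if_inward_derivative_ge:
  assumes "r \<ge> 2" and "s \<ge> 2" and "0 < T"
    and seg: "\<forall>t\<in>{0<..<T}. (a + t * da, b + t * db) \<in> phi_dom r s"
    and lim: "(c \<longlongrightarrow> L) (at_right 0)" and "0 < k"
    and bound: "\<forall>t\<in>{0<..<T}. c t - k * ln t
      \<le> dphi_da r s (a + t * da) (b + t * db) * da + dphi_db r s (a + t * da) (b + t * db) * db"
  shows "\<not> (\<exists>e>0. \<forall>q\<in>phi_dom r s. dist q (a, b) < e \<longrightarrow> phi r s q \<le> phi r s (a, b))"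
proof (rule not_local_max_if_ray_derivative_tendsto_at_top[OF continuous_on_phi \<open>0 < T\<close>])
  show "\<forall>t\<in>{0<..<T}. (a, b) + t *\<^sub>R (da, db) \<in> phi_dom r s \<and>
      ((\<lambda>\<tau>. phi r s ((a, b) + \<tau> *\<^sub>R (da, db))) has_real_derivative
        dphi_da r s (a + t * da) (b + t * db) * da + dphi_db r s (a + t * da) (b + t * db) * db) (at t)"
    using seg phi_has_derivative_on_segment[OF assms(1,2) seg] by (simp add: mult.commute)
  show "filterlim (\<lambda>t. dphi_da r s (a + t * da) (b + t * db) * da
      + dphi_db r s (a + t * da) (b + t * db) * db) at_top (at_right 0)"
    by (rule filterlim_at_top_if_ge_minus_ln[OF lim \<open>0 < k\<close>])
      (use bound \<open>0 < T\<close> in \<open>auto simp: eventually_at_right_field\<close>)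
qed

lemma phi_not_local_max_at_alpha_0:
  assumes "r \<ge> 2" and "s \<ge> 2" and "(r, s) \<noteq> (2, 2)" and dom: "(0, b) \<in> phi_dom r s" and "0 < b"
  shows "\<not> (\<exists>e>0. \<forall>q\<in>phi_dom r s. dist q (0, b) < e \<longrightarrow> phi r s q \<le> phi r s (0, b))"
proof -
  define R S N where "R = real r" and "S = real s" and "N = real r * real s - real r - real s"
  define T where "T = b / (S - 1)"
  define c where "c t = (2 - S) * (ln (R - 1) + ln (t + (b + t * - (S - 1)))
      - ln (R - 1 - t - (b + t * - (S - 1)))) + 2 * ln (b + t * - (S - 1)) - ln N" for t
  have "S - 1 \<ge> 1" using assms(2) by (simp add: S_def)
  have "0 < T" using \<open>0 < b\<close> \<open>S - 1 \<ge> 1\<close> by (simp add: T_def)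
  have "0 < R - 1 - b" using phi_dom_r_sub_one_sub_pos[OF dom assms(1-3)] by (simp add: R_def)
  then have lim: "(c \<longlongrightarrow> c 0) (at_right 0)"
    unfolding c_def using \<open>0 < b\<close> by (intro tendsto_intros) auto
  have "b \<le> 1" and "0 \<le> N - S * b"
    using phi_dom_args_nonneg[OF dom assms(1,2)] by (auto simp: N_def S_def)
  have in_seg: "0 < b + t * - (S - 1)" "0 < N - S * (b + t * - (S - 1))"
      "N - S * (b + t * - (S - 1)) \<le> N"
    if "0 < t" "t < T" for t
  proof -
    have "(S - 1) * t < b" using that \<open>S - 1 \<ge> 1\<close> by (simp add: T_def field_simps)
    moreover have "S * ((S - 1) * t) < S * b" "0 < S * ((S - 1) * t)"
      using calculation that \<open>S - 1 \<ge> 1\<close> by simp_all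
    moreover have "N - S * (b + t * - (S - 1)) = (N - S * b) + S * ((S - 1) * t)"
      by (simp add: algebra_simps)
    ultimately show "0 < b + t * - (S - 1)" "0 < N - S * (b + t * - (S - 1))"
        "N - S * (b + t * - (S - 1)) \<le> N"
      using \<open>0 \<le> N - S * b\<close> by (simp_all add: algebra_simps)
  qed
  show ?thesis
  proof (rule phi_not_local_max_if_inward_derivative_ge[OF assms(1,2) \<open>0 < T\<close> _ lim zero_less_one])
    show "\<forall>t\<in>{0<..<T}. (0 + t * 1, b + t * - (real s - 1)) \<in> phi_dom r s"
      using in_seg \<open>b \<le> 1\<close> by (auto simp: phi_dom_def Kset_def S_def N_def algebra_simps less_imp_le)
    show "\<forall>t\<in>{0<..<T}. c t - 1 * ln t \<le> dphi_da r s (0 + t * 1) (b + t * - (real s - 1)) * 1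
        + dphi_db r s (0 + t * 1) (b + t * - (real s - 1)) * - (real s - 1)"
    proof
      fix t assume "t \<in> {0<..<T}"
      note seg = in_seg[of t] \<open>t \<in> {0<..<T}\<close>
      \<comment> \<open>\<open>rs - r - s - s\<beta>\<close> may vanish at the starting point, so it is only bounded above\<close>
      have "ln (N - S * (b + t * - (S - 1))) \<le> ln N"
        using seg by (subst ln_le_cancel_iff) auto
      then have "(S - 1) * ln (N - S * (b + t * - (S - 1))) \<le> (S - 1) * ln N"
        using \<open>S - 1 \<ge> 1\<close> by (intro mult_left_mono) simp_all
      then show "c t - 1 * ln t \<le> dphi_da r s (0 + t * 1) (b + t * - (real s - 1)) * 1
          + dphi_db r s (0 + t * 1) (b + t * - (real s - 1)) * - (real s - 1)"
        using \<open>S - 1 \<ge> 1\<close> unfolding c_def dphi_da_def dphi_db_def N_def[symmetric]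
        by (simp add: R_def[symmetric] S_def[symmetric] field_simps)
    qed
  qed
qed

lemma phi_not_local_max_at_beta_0:
  assumes "r \<ge> 2" and "s \<ge> 2" and "(r, s) \<noteq> (2, 2)" and dom: "(a, 0) \<in> phi_dom r s" and "0 < a"
  shows "\<not> (\<exists>e>0. \<forall>q\<in>phi_dom r s. dist q (a, 0) < e \<longrightarrow> phi r s q \<le> phi r s (a, 0))"
proof -
  define R S N where "R = real r" and "S = real s" and "N = real r * real s - real r - real s"
  define T where "T = min a (N / (S * (S - 1)))"
  define c where "c t = (S - 2) * (ln (R - 1) + ln (a + t * - 1 + (0 + t * (S - 1)))
      - ln (R - 1 - (a + t * - 1) - (0 + t * (S - 1))))
      + ln (a + t * - 1) + ln (N - S * (0 + t * (S - 1))) - 2 * ln (S - 1)" for t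
  have "S - 1 \<ge> 1" using assms(2) by (simp add: S_def)
  have "0 < N" unfolding N_def using rs_sub_r_sub_s_pos[OF assms(1-3)] .
  have "0 < T" using \<open>0 < a\<close> \<open>0 < N\<close> \<open>S - 1 \<ge> 1\<close> by (simp add: T_def)
  have "0 < R - 1 - a" using phi_dom_r_sub_one_sub_pos[OF dom assms(1-3)] by (simp add: R_def)
  then have lim: "(c \<longlongrightarrow> c 0) (at_right 0)"
    unfolding c_def using \<open>0 < a\<close> \<open>0 < N\<close> by (intro tendsto_intros) auto
  have "(S - 1) * a \<le> 1" using dom by (simp add: phi_dom_def Kset_def S_def)
  have in_seg: "0 < a + t * - 1" "0 < N - S * (0 + t * (S - 1))" if "0 < t" "t < T" for t
  proof -
    have "S * ((S - 1) * t) < N" using that \<open>S - 1 \<ge> 1\<close> by (simp add: T_def field_simps)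
    then show "0 < a + t * - 1" "0 < N - S * (0 + t * (S - 1))"
      using that by (simp_all add: T_def algebra_simps)
  qed
  show ?thesis
  proof (rule phi_not_local_max_if_inward_derivative_ge[OF assms(1,2) \<open>0 < T\<close> _ lim, where k = 2])
    show "\<forall>t\<in>{0<..<T}. (a + t * - 1, 0 + t * (real s - 1)) \<in> phi_dom r s"
      using in_seg \<open>(S - 1) * a \<le> 1\<close> \<open>S - 1 \<ge> 1\<close>
      by (auto simp: phi_dom_def Kset_def S_def N_def algebra_simps less_imp_le)
    show "\<forall>t\<in>{0<..<T}. c t - 2 * ln t \<le> dphi_da r s (a + t * - 1) (0 + t * (real s - 1)) * - 1
        + dphi_db r s (a + t * - 1) (0 + t * (real s - 1)) * (real s - 1)"
    proof
      fix t assume "t \<in> {0<..<T}"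
      then have "ln (0 + t * (S - 1)) = ln t + ln (S - 1)"
        using \<open>S - 1 \<ge> 1\<close> by (simp add: ln_mult)
      then show "c t - 2 * ln t \<le> dphi_da r s (a + t * - 1) (0 + t * (real s - 1)) * - 1
          + dphi_db r s (a + t * - 1) (0 + t * (real s - 1)) * (real s - 1)"
        using \<open>S - 1 \<ge> 1\<close> unfolding c_def dphi_da_def dphi_db_def N_def[symmetric]
        by (simp add: R_def[symmetric] S_def[symmetric] field_simps)
    qed
  qed simp
qed

lemma phi_not_local_max_at_outer_edge:
  assumes "r \<ge> 2" and "s \<ge> 2" and "(r, s) \<noteq> (2, 2)" and dom: "(a, b) \<in> phi_dom r s"
    and "0 < a" and "0 < b" and edge: "(real s - 1) * a + b = 1"
  shows "\<not> (\<exists>e>0. \<forall>q\<in>phi_dom r s. dist q (a, b) < e \<longrightarrow> phi r s q \<le> phi r s (a, b))"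
proof -
  define R S where "R = real r" and "S = real s"
  define c where "c t = - (ln (R - 1) + ln (a + t * - 1 + (b + t * 0))
      - ln (R - 1 - (a + t * - 1) - (b + t * 0))) + ln (a + t * - 1) - ln (S - 1)" for t
  have "S - 1 \<ge> 1" using assms(2) by (simp add: S_def)
  have "0 < R - 1 - a - b" using phi_dom_r_sub_one_sub_pos[OF dom assms(1-3)] by (simp add: R_def)
  then have lim: "(c \<longlongrightarrow> c 0) (at_right 0)"
    unfolding c_def using \<open>0 < a\<close> \<open>0 < b\<close> by (intro tendsto_intros) auto
  have W: "1 - (S - 1) * (a + t * - 1) - (b + t * 0) = (S - 1) * t" for t
    using edge by (simp add: S_def algebra_simps)
  show ?thesis
  proof (rule phi_not_local_max_if_inward_derivative_ge[OF assms(1,2) \<open>0 < a\<close> _ lim zero_less_one])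
    show "\<forall>t\<in>{0<..<a}. (a + t * - 1, b + t * 0) \<in> phi_dom r s"
      using dom W \<open>S - 1 \<ge> 1\<close> by (auto simp: phi_dom_def Kset_def S_def algebra_simps)
    show "\<forall>t\<in>{0<..<a}. c t - 1 * ln t \<le> dphi_da r s (a + t * - 1) (b + t * 0) * - 1
        + dphi_db r s (a + t * - 1) (b + t * 0) * 0"
    proof
      fix t assume "t \<in> {0<..<a}"
      then have "ln (1 - (S - 1) * (a + t * - 1) - (b + t * 0)) = ln t + ln (S - 1)"
        unfolding W using \<open>S - 1 \<ge> 1\<close> by (simp add: ln_mult)
      then show "c t - 1 * ln t \<le> dphi_da r s (a + t * - 1) (b + t * 0) * - 1
          + dphi_db r s (a + t * - 1) (b + t * 0) * 0"
        unfolding c_def dphi_da_def by (simp add: R_def[symmetric] S_def[symmetric])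
    qed
  qed
qed

lemma mem_interior_Kset:
  assumes "0 < a" and "0 < b" and "(real s - 1) * a + b < 1"
  shows "(a, b) \<in> interior (Kset s)"
proof -
  let ?O = "{q :: real \<times> real. 0 < fst q \<and> 0 < snd q \<and> (real s - 1) * fst q + snd q < 1}"
  have "open ?O" by (intro open_Collect_conj open_Collect_less continuous_intros)
  moreover have "?O \<subseteq> Kset s" by (auto simp: Kset_def)
  ultimately have "?O \<subseteq> interior (Kset s)" by (rule interior_maximal[rotated])
  then show ?thesis using assms by auto
qed

lemma phi_local_max_at_origin_or_interior:
  assumes "r \<ge> 2" and "s \<ge> 2" and "(r, s) \<noteq> (2, 2)" and dom: "p \<in> phi_dom r s"
    and max: "\<exists>e>0. \<forall>q\<in>phi_dom r s. dist q p < e \<longrightarrow> phi r s q \<le> phi r s p"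
  shows "p = (0, 0) \<or> p \<in> interior (Kset s)"
proof -
  obtain a b where p: "p = (a, b)" by fastforce
  note nonneg = phi_dom_args_nonneg[OF dom[unfolded p] assms(1,2)]
  consider "a = 0" "b = 0" | "a = 0" "0 < b" | "0 < a" "b = 0"
    | "0 < a" "0 < b" "(real s - 1) * a + b = 1" | "0 < a" "0 < b" "(real s - 1) * a + b < 1"
    using nonneg(1,2,6) by fastforce
  then show ?thesis
  proof cases
    case 2
    then show ?thesis using phi_not_local_max_at_alpha_0[OF assms(1-3), of b] dom max p by blast
  next
    case 3
    then show ?thesis using phi_not_local_max_at_beta_0[OF assms(1-3), of a] dom max p by blast
  next
    case 4
    then show ?thesis using phi_not_local_max_at_outer_edge[OF assms(1-3), of a b] dom max p by blast
  qed (simp_all add: p mem_interior_Kset)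
qed

definition crit_alpha :: "nat \<Rightarrow> nat \<Rightarrow> real \<Rightarrow> real \<Rightarrow> bool" where
  "crit_alpha r s a b \<longleftrightarrow>
     (real r - 1) * (a + b) * (1 - (real s - 1) * a - b) = a * (real r - 1 - a - b)"

definition crit_beta :: "nat \<Rightarrow> nat \<Rightarrow> real \<Rightarrow> real \<Rightarrow> bool" where
  "crit_beta r s a b \<longleftrightarrow>
     a ^ (s - 1) * (real r * real s - real r - real s - real s * b)
       = b\<^sup>2 * (1 - (real s - 1) * a - b) ^ (s - 2)"

lemma dphi_da_eq_0_iff:
  assumes "r \<ge> 2" and "0 < a" and "0 < b" and "0 < real r - 1 - a - b"
    and "0 < 1 - (real s - 1) * a - b"
  shows "dphi_da r s a b = 0 \<longleftrightarrow> crit_alpha r s a b"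
proof -
  have "dphi_da r s a b = ln ((real r - 1) * (a + b) * (1 - (real s - 1) * a - b))
      - ln (a * (real r - 1 - a - b))"
    using assms by (simp add: dphi_da_def ln_mult)
  then show ?thesis using assms by (simp add: crit_alpha_def)
qed

lemma crit_beta_if_dphi_eq_0:
  assumes "s \<ge> 2" and "0 < a" and "0 < b"
    and "0 < real r * real s - real r - real s - real s * b" and "0 < 1 - (real s - 1) * a - b"
    and "dphi_da r s a b = 0" and "dphi_db r s a b = 0"
  shows "crit_beta r s a b"
proof -
  define U W where "U = real r * real s - real r - real s - real s * b"
    and "W = 1 - (real s - 1) * a - b"
  define E where "E = ln (real r - 1) + ln (a + b) - ln (real r - 1 - a - b)"
  have E: "E = ln a - ln W" using assms(6) by (simp add: dphi_da_def E_def W_def)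
  have "(real s - 1) * E + (ln U + ln W - 2 * ln b) = 0"
    using assms(1,7) by (simp add: dphi_db_def E_def U_def W_def field_simps)
  then have "(real s - 1) * ln a + ln U = 2 * ln b + (real s - 2) * ln W"
    unfolding E by (simp add: algebra_simps)
  moreover have "ln (a ^ (s - 1) * U) = (real s - 1) * ln a + ln U"
    and "ln (b\<^sup>2 * W ^ (s - 2)) = 2 * ln b + (real s - 2) * ln W"
    using assms(1-5) by (simp_all add: U_def W_def ln_mult ln_realpow of_nat_diff)
  ultimately have "ln (a ^ (s - 1) * U) = ln (b\<^sup>2 * W ^ (s - 2))" by simp
  then show ?thesis using assms(2-5) by (simp add: crit_beta_def U_def W_def)
qed

lemma den_x_eq:
  "den_x r s x = (real r * real s - real r - real s) + (1 + x) * (real s + x / (real r - 1))"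
  by (simp add: den_x_def algebra_simps add_divide_distrib diff_divide_distrib)

lemma den_x_pos:
  assumes "r \<ge> 2" and "s \<ge> 1" and "0 < real r * real s - real r - real s" and "-1 < x"
  shows "0 < den_x r s x"
proof -
  have "-1 < x / (real r - 1)" using assms(1,4) by (simp add: field_simps)
  then have "0 < (1 + x) * (real s + x / (real r - 1))" using assms(2,4) by simp
  then show ?thesis using assms(3) by (simp add: den_x_eq)
qed

lemma den_x_less:
  assumes "r \<ge> 2" and "s \<ge> 1" and "-1 < y" and "y < x"
  shows "den_x r s y < den_x r s x"
proof -
  have "x * (x + 1) - y * (y + 1) = (x - y) * (x + y + 1)" by (simp add: algebra_simps)
  then have "x * (x + 1) / (real r - 1) - y * (y + 1) / (real r - 1)
      = (x - y) * ((x + y + 1) / (real r - 1))"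
    by (metis diff_divide_distrib times_divide_eq_right)
  then have diff: "den_x r s x - den_x r s y = (x - y) * (real s + (x + y + 1) / (real r - 1))"
    by (simp add: den_x_def algebra_simps)
  have "-1 < (x + y + 1) / (real r - 1)" using assms by (simp add: field_simps)
  then have "0 < real s + (x + y + 1) / (real r - 1)" using assms(2) by linarith
  then have "0 < (x - y) * (real s + (x + y + 1) / (real r - 1))" using assms(4) by simp
  then show ?thesis using diff by linarith
qed

lemma den_x_has_real_derivative:
  assumes "r \<ge> 2"
  shows "(den_x r s has_real_derivative real s + (2 * x + 1) / (real r - 1)) (at x)"
proof -
  have "((\<lambda>y. real r * real s - real r + real s * y) has_real_derivative real s) (at x)"
    by (auto intro!: derivative_eq_intros)
  moreover have "((\<lambda>y. y * (y + 1) / (real r - 1)) has_real_derivative (2 * x + 1) / (real r - 1)) (at x)"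
    by (rule DERIV_cdivide) (auto intro!: derivative_eq_intros)
  ultimately show ?thesis unfolding den_x_def[abs_def] by (rule DERIV_add)
qed

lemma beta_x_has_real_derivative:
  assumes "r \<ge> 2" and "den_x r s x \<noteq> 0"
  shows "(beta_x r s has_real_derivative
           - (real r * real s - real r - real s) * (real s + (2 * x + 1) / (real r - 1))
             / (den_x r s x)\<^sup>2) (at x)"
  unfolding beta_x_def[abs_def] using assms
  by (auto intro!: derivative_eq_intros den_x_has_real_derivative simp: power2_eq_square field_simps)

lemma alpha_x_differentiable:
  assumes "r \<ge> 2" and "den_x r s x \<noteq> 0"
  shows "\<exists>A'. (alpha_x r s has_real_derivative A') (at x)"
  unfolding alpha_x_def[abs_def] using assms
  by (auto intro!: derivative_eq_intros den_x_has_real_derivative)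

context
  fixes r s :: nat and x :: real
  assumes r: "r \<ge> 2" and s: "s \<ge> 2" and N: "0 < real r * real s - real r - real s"
    and x: "-1 < x"
begin

lemma alpha_x_pos: "0 < alpha_x r s x"
  using den_x_pos[OF r _ N x] s x by (simp add: alpha_x_def)

lemma beta_x_pos: "0 < beta_x r s x"
  using den_x_pos[OF r _ N x] s N by (simp add: beta_x_def)

lemma one_sub_alpha_beta_x_eq:
  "1 - (real s - 1) * alpha_x r s x - beta_x r s x = alpha_x r s x * (1 + x / (real r - 1))"
proof -
  define D where "D = den_x r s x"
  have "0 < D" unfolding D_def using den_x_pos[OF r _ N x] s by simp
  have "D - (real s - 1) * (1 + x) - (real r * real s - real r - real s)
      = (1 + x) * (1 + x / (real r - 1))"
    by (simp add: D_def den_x_eq algebra_simps)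
  moreover have "1 - (real s - 1) * alpha_x r s x - beta_x r s x
      = (D - (real s - 1) * (1 + x) - (real r * real s - real r - real s)) / D"
    using \<open>0 < D\<close> by (simp add: alpha_x_def beta_x_def D_def[symmetric] field_simps)
  ultimately show ?thesis by (simp add: alpha_x_def D_def[symmetric])
qed

lemma rs_sub_s_beta_x_eq:
  "real r * real s - real r - real s - real s * beta_x r s x = beta_x r s x * (den_x r s x - real s)"
  using den_x_pos[OF r _ N x] s by (simp add: beta_x_def field_simps)

lemma alpha_add_beta_x_eq: "(alpha_x r s x + beta_x r s x) * (real r + x) = real r - 1"
proof -
  define D where "D = den_x r s x"
  have "0 < D" unfolding D_def using den_x_pos[OF r _ N x] s by simp
  have "(real r - 1) * D = (real r - 1) * (real r * real s - real r + real s * x) + x * (x + 1)"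
    using r by (simp add: D_def den_x_def field_simps)
  moreover have "(1 + x + (real r * real s - real r - real s)) * (real r + x)
      = (real r - 1) * (real r * real s - real r + real s * x) + x * (x + 1)"
    by (simp add: algebra_simps)
  ultimately have "(1 + x + (real r * real s - real r - real s)) * (real r + x) = (real r - 1) * D"
    by linarith
  moreover have "alpha_x r s x + beta_x r s x = (1 + x + (real r * real s - real r - real s)) / D"
    by (simp add: alpha_x_def beta_x_def D_def[symmetric] add_divide_distrib)
  ultimately show ?thesis using \<open>0 < D\<close> by simp
qed

lemma crit_alpha_on_curve: "crit_alpha r s (alpha_x r s x) (beta_x r s x)"
proof -
  let ?a = "alpha_x r s x" and ?b = "beta_x r s x"
  have r_sub_one: "(real r - 1) * (1 + x / (real r - 1)) = real r - 1 + x"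
    using r by (simp add: field_simps)
  have "(real r - 1) * (?a + ?b) * (1 - (real s - 1) * ?a - ?b)
      = ?a * ((?a + ?b) * ((real r - 1) * (1 + x / (real r - 1))))"
    unfolding one_sub_alpha_beta_x_eq by (simp add: mult_ac)
  also have "\<dots> = ?a * ((?a + ?b) * (real r + x) - (?a + ?b))"
    unfolding r_sub_one by (simp add: algebra_simps)
  also have "\<dots> = ?a * (real r - 1 - ?a - ?b)" by (simp add: alpha_add_beta_x_eq)
  finally show ?thesis by (simp add: crit_alpha_def)
qed

lemma star_eq_if_crit_beta_on_curve:
  assumes "crit_beta r s (alpha_x r s x) (beta_x r s x)"
  shows "star_eq r s x"
proof -
  let ?a = "alpha_x r s x" and ?b = "beta_x r s x" and ?c = "1 + x / (real r - 1)"
  define D where "D = den_x r s x"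
  have "0 < D" unfolding D_def using den_x_pos[OF r _ N x] s by simp
  have "s - 1 = Suc (s - 2)" using s by simp
  then have "?a ^ (s - 1) = ?a * ?a ^ (s - 2)" by (simp only: power_Suc)
  then have "?a ^ (s - 2) * (?a * (?b * (D - real s))) = ?a ^ (s - 2) * (?b * (?b * ?c ^ (s - 2)))"
    using assms unfolding crit_beta_def one_sub_alpha_beta_x_eq rs_sub_s_beta_x_eq D_def[symmetric]
    by (simp add: power_mult_distrib power2_eq_square mult_ac)
  then have "?a * (D - real s) = ?b * ?c ^ (s - 2)"
    using alpha_x_pos beta_x_pos by simp
  then have "(1 + x) * (D - real s) = (real r * real s - real r - real s) * ?c ^ (s - 2)"
    using \<open>0 < D\<close> by (simp add: alpha_x_def beta_x_def D_def[symmetric] field_simps)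
  then show ?thesis by (simp add: star_eq_def D_def den_x_def algebra_simps)
qed

end

lemma on_curve_if_crit_alpha:
  assumes "r \<ge> 2" and "0 < real r * real s - real r - real s"
    and "0 < a" and "0 < b" and crit: "crit_alpha r s a b"
  shows "\<exists>x>-1. a = alpha_x r s x \<and> b = beta_x r s x"
proof -
  define N where "N = real r * real s - real r - real s"
  define x where "x = N * a / b - 1"
  have "-1 < x" using assms(2-4) by (simp add: x_def N_def)
  have "b * (real r - 1) * (1 - b - real s * a) = a * (N * a - b)"
    using crit by (simp add: crit_alpha_def N_def algebra_simps)
  then have xa: "x * a = (real r - 1) * (1 - b - real s * a)"
    using assms(4) by (simp add: x_def field_simps)
  have "den_x r s x * b = N * b + real s * ((1 + x) * b) + (x * a) * N / (real r - 1)"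
    using assms(4) by (simp add: den_x_eq x_def N_def field_simps)
  also have "\<dots> = N"
    unfolding xa using assms(1,4) by (simp add: x_def field_simps)
  finally have "den_x r s x = N / b" using assms(4) by (simp add: field_simps)
  moreover have "1 + x = N * a / b" by (simp add: x_def)
  ultimately have "b = beta_x r s x" and "a = alpha_x r s x"
    using assms(2,4) by (simp_all add: beta_x_def alpha_x_def N_def[symmetric])
  then show ?thesis using \<open>-1 < x\<close> by blast
qed

lemma interior_phi_dom_args_pos:
  assumes "(a, b) \<in> interior (phi_dom r s)" and "s \<ge> 2"
  shows "0 < a" "0 < b" "0 < 1 - (real s - 1) * a - b"
    "0 < real r * real s - real r - real s - real s * b"
proof -
  have halfspace: "c < w \<bullet> (a, b)" if "w \<noteq> 0" and "phi_dom r s \<subseteq> {q. c \<le> w \<bullet> q}"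
    for w :: "real \<times> real" and c
    using interior_mono[OF that(2)] assms(1) interior_halfspace_ge[OF that(1), of c] by auto
  have "phi_dom r s \<subseteq> {q. 0 \<le> (1, 0) \<bullet> q}" by (auto simp: phi_dom_def Kset_def)
  then show "0 < a" using halfspace[of "(1, 0)" 0] by (simp add: zero_prod_def)
  have "phi_dom r s \<subseteq> {q. 0 \<le> (0, 1) \<bullet> q}" by (auto simp: phi_dom_def Kset_def)
  then show "0 < b" using halfspace[of "(0, 1)" 0] by (simp add: zero_prod_def)
  have "phi_dom r s \<subseteq> {q. - 1 \<le> (- (real s - 1), - 1) \<bullet> q}"
    by (auto simp: phi_dom_def Kset_def algebra_simps)
  then show "0 < 1 - (real s - 1) * a - b"
    using halfspace[of "(- (real s - 1), - 1)" "- 1"] by (simp add: zero_prod_def algebra_simps)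
  have "phi_dom r s \<subseteq> {q. - (real r * real s - real r - real s) \<le> (0, - real s) \<bullet> q}"
    by (auto simp: phi_dom_def algebra_simps)
  then show "0 < real r * real s - real r - real s - real s * b"
    using halfspace[of "(0, - real s)" "- (real r * real s - real r - real s)"] assms(2)
    by (simp add: zero_prod_def algebra_simps)
qed

lemma dphi_eq_0_if_stationary:
  assumes "s \<ge> 2" and "0 < a" and "0 < b" and "0 < real r - 1 - a - b"
    and "0 < real r * real s - real r - real s - real s * b" and "0 < 1 - (real s - 1) * a - b"
    and stat: "(phi r s has_derivative (\<lambda>_. 0)) (at (a, b))"
  shows "dphi_da r s a b = 0" and "dphi_db r s a b = 0"
proof -
  have directional: "dphi_da r s a b * u + dphi_db r s a b * v = 0" for u v
  proof -
    have "((\<lambda>y. (a + y * u, b + y * v)) has_derivative (\<lambda>h. (h * u, h * v))) (at 0)"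
      by (auto intro!: derivative_eq_intros)
    moreover have "(phi r s has_derivative (\<lambda>_. 0)) (at (a + 0 * u, b + 0 * v))" using stat by simp
    ultimately have "((\<lambda>y. phi r s (a + y * u, b + y * v)) has_derivative (\<lambda>_. 0)) (at 0)"
      using has_derivative_compose by fastforce
    moreover have "(*) (0 :: real) = (\<lambda>_. 0)" by auto
    ultimately have "((\<lambda>y. phi r s (a + y * u, b + y * v)) has_real_derivative 0) (at 0)"
      by (simp add: has_field_derivative_def)
    moreover have "((\<lambda>y. phi r s (a + y * u, b + y * v)) has_real_derivative
        dphi_da r s (a + 0 * u) (b + 0 * v) * u + dphi_db r s (a + 0 * u) (b + 0 * v) * v) (at 0)"
      by (rule phi_has_derivative_along) (use assms in \<open>auto intro!: derivative_eq_intros\<close>)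
    ultimately show ?thesis using DERIV_unique by fastforce
  qed
  show "dphi_da r s a b = 0" using directional[of 1 0] by simp
  show "dphi_db r s a b = 0" using directional[of 0 1] by simp
qed

lemma stationary_interior_point_on_curve:
  assumes "r \<ge> 2" and "s \<ge> 2" and "(r, s) \<noteq> (2, 2)"
    and int: "(a, b) \<in> interior (phi_dom r s)" and stat: "(phi r s has_derivative (\<lambda>_. 0)) (at (a, b))"
  shows "\<exists>x>-1. a = alpha_x r s x \<and> b = beta_x r s x \<and> star_eq r s x"
proof -
  note N = rs_sub_r_sub_s_pos[OF assms(1-3)]
  note pos = interior_phi_dom_args_pos[OF int assms(2)]
  have mid: "0 < real r - 1 - a - b"
    using phi_dom_r_sub_one_sub_pos[OF interior_subset[THEN subsetD, OF int] assms(1-3)] .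
  note dphi_0 = dphi_eq_0_if_stationary[OF assms(2) pos(1,2) mid pos(4,3) stat]
  have "crit_alpha r s a b" using dphi_da_eq_0_iff[OF assms(1) pos(1,2) mid pos(3)] dphi_0(1) by simp
  then obtain x where "-1 < x" and ab: "a = alpha_x r s x" "b = beta_x r s x"
    using on_curve_if_crit_alpha[OF assms(1) N pos(1,2)] by blast
  have "crit_beta r s a b" by (rule crit_beta_if_dphi_eq_0[OF assms(2) pos(1,2,4,3) dphi_0])
  then have "star_eq r s x" using star_eq_if_crit_beta_on_curve[OF assms(1,2) N \<open>-1 < x\<close>] ab by simp
  then show ?thesis using \<open>-1 < x\<close> ab by blast
qed

text \<open>Left of an interior point of \<open>f_dom\<close> the constraint \<open>rs - r - s - s\<beta>(y) \<ge> 0\<close> still holds,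
  and \<open>den_x\<close> is strictly increasing, so the constraint is strict at the point itself.\<close>

lemma interior_f_domD:
  assumes "r \<ge> 2" and "s \<ge> 2" and N: "0 < real r * real s - real r - real s"
    and int: "x \<in> interior (f_dom r s)"
  shows "-1 < x" and "(alpha_x r s x, beta_x r s x) \<in> phi_dom r s"
    and "0 < real r * real s - real r - real s - real s * beta_x r s x"
proof -
  obtain e where "0 < e" and ball: "ball x e \<subseteq> f_dom r s" using int mem_interior by blast
  then have "x \<in> f_dom r s" by auto
  then show x: "-1 < x" and "(alpha_x r s x, beta_x r s x) \<in> phi_dom r s"
    by (auto simp: f_dom_def)
  define y where "y = x - e / 2"
  have "y \<in> f_dom r s" using ball \<open>0 < e\<close> by (auto simp: y_def dist_real_def)
  then have y: "-1 < y" and "0 \<le> real r * real s - real r - real s - real s * beta_x r s y"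
    by (auto simp: f_dom_def phi_dom_def)
  then have "real s \<le> den_x r s y"
    using beta_x_pos[OF assms(1,2) N y]
    by (simp add: rs_sub_s_beta_x_eq[OF assms(1,2) N y] zero_le_mult_iff)
  moreover have "den_x r s y < den_x r s x"
    using den_x_less[OF assms(1) _ y] \<open>0 < e\<close> assms(2) by (simp add: y_def)
  ultimately show "0 < real r * real s - real r - real s - real s * beta_x r s x"
    using beta_x_pos[OF assms(1,2) N x] by (simp add: rs_sub_s_beta_x_eq[OF assms(1,2) N x])
qed

lemma star_eq_if_stationary_on_curve:
  assumes "r \<ge> 2" and "s \<ge> 2" and "(r, s) \<noteq> (2, 2)"
    and int: "x \<in> interior (f_dom r s)"
    and stat: "((\<lambda>y. phi r s (alpha_x r s y, beta_x r s y)) has_real_derivative 0) (at x)"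
  shows "star_eq r s x"
proof -
  note N = rs_sub_r_sub_s_pos[OF assms(1-3)]
  note x = interior_f_domD(1)[OF assms(1,2) N int]
    and U = interior_f_domD(3)[OF assms(1,2) N int]
  note a = alpha_x_pos[OF assms(1,2) N x] and b = beta_x_pos[OF assms(1,2) N x]
  note mid = phi_dom_r_sub_one_sub_pos[OF interior_f_domD(2)[OF assms(1,2) N int] assms(1-3)]
  have "0 < 1 + x / (real r - 1)" using x assms(1) by (simp add: field_simps)
  then have W: "0 < 1 - (real s - 1) * alpha_x r s x - beta_x r s x"
    using a by (simp add: one_sub_alpha_beta_x_eq[OF assms(1,2) N x])
  have D: "den_x r s x \<noteq> 0" using den_x_pos[OF assms(1) _ N x] assms(2) by simp
  obtain A' where dA: "(alpha_x r s has_real_derivative A') (at x)"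
    using alpha_x_differentiable[OF assms(1) D] by blast
  define B' where "B' = - (real r * real s - real r - real s) * (real s + (2 * x + 1) / (real r - 1))
      / (den_x r s x)\<^sup>2"
  have dB: "(beta_x r s has_real_derivative B') (at x)"
    unfolding B'_def by (rule beta_x_has_real_derivative[OF assms(1) D])
  have "-1 < (2 * x + 1) / (real r - 1)" using x assms(1) by (simp add: field_simps)
  then have "B' \<noteq> 0" using N D assms(2) by (simp add: B'_def)
  have "dphi_da r s (alpha_x r s x) (beta_x r s x) = 0"
    using dphi_da_eq_0_iff[OF assms(1) a b mid W] crit_alpha_on_curve[OF assms(1,2) N x] by simp
  moreover have "((\<lambda>y. phi r s (alpha_x r s y, beta_x r s y)) has_real_derivative
      dphi_da r s (alpha_x r s x) (beta_x r s x) * A' + dphi_db r s (alpha_x r s x) (beta_x r s x) * B')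
      (at x)"
    by (rule phi_has_derivative_along[OF assms(2) dA dB]) (use a b mid U W in auto)
  ultimately have "dphi_db r s (alpha_x r s x) (beta_x r s x) = 0"
    using DERIV_unique[OF stat] \<open>B' \<noteq> 0\<close> by fastforce
  then have "crit_beta r s (alpha_x r s x) (beta_x r s x)"
    using crit_beta_if_dphi_eq_0[OF assms(2) a b U W] \<open>dphi_da r s _ _ = 0\<close> by blast
  then show ?thesis by (rule star_eq_if_crit_beta_on_curve[OF assms(1,2) N x])
qed

theorem lemmaA1:
  fixes r s :: nat
  assumes "r \<ge> 2" and "s \<ge> 2"
    and "(s \<ge> 5 \<and> real r > rho s) \<or> (s \<in> {2, 3, 4} \<and> (r, s) \<noteq> (2, 2))"
  shows "(\<forall>p \<in> phi_dom r s.
           (\<exists>e > 0. \<forall>q \<in> phi_dom r s. dist q p < e \<longrightarrow> phi r s q \<le> phi r s p)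
           \<longrightarrow> p = (0, 0) \<or> p \<in> interior (Kset s))
    \<and> (\<forall>a b. (a, b) \<in> interior (Kset s) \<and> (a, b) \<in> interior (phi_dom r s)
           \<and> (phi r s has_derivative (\<lambda>_. 0)) (at (a, b))
           \<longrightarrow> (\<exists>x > -1. a = alpha_x r s x \<and> b = beta_x r s x \<and> star_eq r s x))
    \<and> (\<forall>x. x \<in> interior (f_dom r s)
           \<and> ((\<lambda>y. phi r s (alpha_x r s y, beta_x r s y)) has_real_derivative 0) (at x)
           \<longrightarrow> star_eq r s x)"
proof -
  have "(r, s) \<noteq> (2, 2)" using assms(3) by auto
  then show ?thesis
    using phi_local_max_at_origin_or_interior[OF assms(1,2)]
      stationary_interior_point_on_curve[OF assms(1,2)]
      star_eq_if_stationary_on_curve[OF assms(1,2)]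
    by blast
qed

end
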